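(* Let $f(z)=z+\sum_{n\ge 2}a_nz^n\in\mathcal{BT}_{\mathfrak{B}}$ and let $\Gamma_1,\Gamma_2$ be the logarithmic inverse coefficients of $f$. Then $$|\Gamma_1|\le\frac18\qquad\text{and}\qquad |\Gamma_2|\le\frac{1}{12}.$$ The inequalities are sharp, with equality for $f_1(z)=\int_0^z\sqrt{1+\tanh t}\,dt$ and $f_2(z)=\int_0^z\sqrt{1+\tanh(t^2)}\,dt$, respectively.
   Context: $\mathbb{D}=\{z\in\mathbb{C}:|z|<1\}$. $\mathcal{S}$ is the class of univalent analytic functions $f$ on $\mathbb{D}$ normalized by $f(0)=0$, $f'(0)=1$, i.e. $f(z)=z+\sum_{n\ge2}a_nz^n$. For analytic $g,h$ on $\mathbb{D}$, $g\prec h$ means there is an analytic $\omega:\mathbb{D}\to\mathbb{D}$ with $\omega(0)=0$ and $g=h\circ\omega$. Let $\mathfrak{B}(z)=\sqrt{1+\tanh z}$ (principal branch, $\mathfrak{B}(0)=1$). The class $\mathcal{BT}_{\mathfrak{B}}$ is $\{f\in\mathcal{S}: f'(z)\prec \mathfrak{B}(z)\}$. For $f\in\mathcal{S}$ let $F=f^{-1}$ be its inverse, defined near $0$ (at least on $|w|<1/4$). The logarithmic inverse coefficients $\Gamma_n$ are defined by $\log\frac{f^{-1}(w)}{w}=2\sum_{n\ge1}\Gamma_n w^n$; explicitly $\Gamma_1=-\tfrac12a_2$, $\Gamma_2=-\tfrac12(a_3-\tfrac32a_2^2)$, $\Gamma_3=-\tfrac12(a_4-4a_2a_3+\tfrac{10}{3}a_2^3)$.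 *)

theory Defs
  imports "HOL-Complex_Analysis.Complex_Analysis"
begin

definition Bfun :: "complex \<Rightarrow> complex" where
  "Bfun z = csqrt (1 + tanh z)"

definition subordinate :: "(complex \<Rightarrow> complex) \<Rightarrow> (complex \<Rightarrow> complex) \<Rightarrow> bool" where
  "subordinate g h \<longleftrightarrow>
     (\<exists>\<omega>. \<omega> holomorphic_on ball 0 1 \<and> \<omega> 0 = 0 \<and>
          (\<forall>z\<in>ball 0 1. norm (\<omega> z) < 1) \<and>
          (\<forall>z\<in>ball 0 1. g z = h (\<omega> z)))"

definition classS :: "(complex \<Rightarrow> complex) set" where
  "classS = {f. f holomorphic_on ball 0 1 \<and> inj_on f (ball 0 1) \<and> f 0 = 0 \<and> deriv f 0 = 1}"

definition classBT :: "(complex \<Rightarrow> complex) set" where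
  "classBT = {f \<in> classS. subordinate (deriv f) Bfun}"

text \<open>Logarithmic inverse coefficients: log (F(w)/w) = 2 * sum Gamma_n w^n,
  where F is the inverse of f on the unit disc; the function log(F(w)/w)
  is extended by its limit value 0 (= log F'(0)) at w = 0.\<close>
definition log_inv_fun :: "(complex \<Rightarrow> complex) \<Rightarrow> complex \<Rightarrow> complex" where
  "log_inv_fun f w = (if w = 0 then 0 else Ln (inv_into (ball 0 1) f w / w))"

definition log_inv_coeff :: "(complex \<Rightarrow> complex) \<Rightarrow> nat \<Rightarrow> complex" where
  "log_inv_coeff f n = ((deriv ^^ n) (log_inv_fun f) 0 / fact n) / 2"

definition f1 :: "complex \<Rightarrow> complex" where
  "f1 z = contour_integral (linepath 0 z) Bfun"

definition f2 :: "complex \<Rightarrow> complex" where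
  "f2 z = contour_integral (linepath 0 z) (\<lambda>t. Bfun (t ^ 2))"

end

theory Submission
  imports Defs
begin

text \<open>Write \<open>f' = B \<circ> \<omega>\<close> with a Schwarz function \<open>\<omega>\<close>, and put \<open>c = \<omega>'(0)\<close>, \<open>d = \<omega>''(0)\<close>.
  Differentiating \<open>f (F w) = w\<close> and expanding \<open>log (F w / w)\<close> gives
  \<open>\<Gamma>\<^sub>1 = -f''(0)/4\<close> and \<open>\<Gamma>\<^sub>2 = 3 f''(0)\<^sup>2/16 - f'''(0)/12\<close>; since \<open>B(0) = 1\<close>,
  \<open>B'(0) = 1/2\<close> and \<open>B''(0) = -1/4\<close>, this becomes \<open>\<Gamma>\<^sub>1 = -c/8\<close> and
  \<open>\<Gamma>\<^sub>2 = 13 c\<^sup>2/192 - d/24\<close>. The Schwarz lemma gives \<open>|c| \<le> 1\<close> and, applied via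
  Schwarz-Pick to \<open>\<omega>(z)/z\<close>, \<open>|d| \<le> 2 (1 - |c|\<^sup>2)\<close>; hence \<open>|\<Gamma>\<^sub>2| \<le> 1/12 - |c|\<^sup>2/64\<close>.
  Equality holds for \<open>\<omega>(z) = z\<close> and \<open>\<omega>(z) = z\<^sup>2\<close>; the corresponding integrals of \<open>B \<circ> \<omega>\<close>
  are univalent because \<open>1 + tanh\<close> maps the disc into the slit plane, so \<open>Re B > 0\<close>
  (Noshiro-Warschawski).\<close>

section \<open>Higher-order chain rules\<close>

lemma deriv_cong_on_open:
  fixes a b :: "complex \<Rightarrow> complex"
  assumes "open U" "w \<in> U" "\<And>x. x \<in> U \<Longrightarrow> a x = b x"
  shows "deriv a w = deriv b w"
  by (rule deriv_cong_ev) (use assms in \<open>auto simp: eventually_nhds\<close>)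

lemma deriv_compose:
  fixes g p :: "complex \<Rightarrow> complex"
  assumes "g holomorphic_on V" "open V" "p holomorphic_on U" "open U" "p ` U \<subseteq> V" "w \<in> U"
  shows "deriv (\<lambda>x. g (p x)) w = deriv g (p w) * deriv p w"
  using deriv_chain[of p w g] assms
  by (auto simp: comp_def holomorphic_on_imp_differentiable_at)

lemma deriv2_compose:
  fixes g p :: "complex \<Rightarrow> complex"
  assumes g: "g holomorphic_on V" "open V" and p: "p holomorphic_on U" "open U"
    and sub: "p ` U \<subseteq> V" and w: "w \<in> U"
  shows "deriv (deriv (\<lambda>x. g (p x))) w
       = deriv (deriv g) (p w) * (deriv p w)^2 + deriv g (p w) * deriv (deriv p) w"
proof -
  have dg: "(\<lambda>x. deriv g (p x)) holomorphic_on U"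
    using holomorphic_deriv_compose[OF g(1) p(1) sub g(2)] .
  have "deriv (deriv (\<lambda>x. g (p x))) w = deriv (\<lambda>x. deriv g (p x) * deriv p x) w"
    using deriv_compose[OF g p sub] by (intro deriv_cong_on_open[OF p(2) w])
  also have "\<dots> = deriv g (p w) * deriv (deriv p) w + deriv (\<lambda>x. deriv g (p x)) w * deriv p w"
    using p w dg by (intro deriv_mult holomorphic_on_imp_differentiable_at holomorphic_deriv)
  also have "deriv (\<lambda>x. deriv g (p x)) w = deriv (deriv g) (p w) * deriv p w"
    using g p sub w by (intro deriv_compose holomorphic_deriv)
  finally show ?thesis by (simp add: power2_eq_square algebra_simps)
qed

lemma deriv3_compose:
  fixes g p :: "complex \<Rightarrow> complex"
  assumes g: "g holomorphic_on V" "open V" and p: "p holomorphic_on U" "open U"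
    and sub: "p ` U \<subseteq> V" and w: "w \<in> U"
  shows "deriv (deriv (deriv (\<lambda>x. g (p x)))) w
       = deriv (deriv (deriv g)) (p w) * (deriv p w)^3
         + 3 * deriv (deriv g) (p w) * deriv p w * deriv (deriv p) w
         + deriv g (p w) * deriv (deriv (deriv p)) w"
proof -
  have g1: "deriv g holomorphic_on V" and g2: "deriv (deriv g) holomorphic_on V"
    and p1: "deriv p holomorphic_on U" and p2: "deriv (deriv p) holomorphic_on U"
    using g p by (auto intro!: holomorphic_deriv)
  have dg1: "(\<lambda>x. deriv g (p x)) holomorphic_on U"
    and dg2: "(\<lambda>x. deriv (deriv g) (p x)) holomorphic_on U"
    using holomorphic_deriv_compose[OF _ p(1) sub g(2)] g(1) g1 by blast+
  have diff: "f holomorphic_on U \<Longrightarrow> f field_differentiable at w" for f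
    using p(2) w by (rule holomorphic_on_imp_differentiable_at[rotated])
  have "deriv (deriv (deriv (\<lambda>x. g (p x)))) w
      = deriv (\<lambda>x. deriv (deriv g) (p x) * (deriv p x)^2 + deriv g (p x) * deriv (deriv p) x) w"
    using deriv2_compose[OF g p sub] by (intro deriv_cong_on_open[OF p(2) w])
  also have "\<dots> = deriv (deriv g) (p w) * (2 * deriv p w * deriv (deriv p) w)
                 + deriv (deriv (deriv g)) (p w) * deriv p w * (deriv p w)^2
                 + (deriv g (p w) * deriv (deriv (deriv p)) w
                    + deriv (deriv g) (p w) * deriv p w * deriv (deriv p) w)"
    using deriv_compose[OF g2 g(2) p sub w] deriv_compose[OF g1 g(2) p sub w]
    by (simp add: diff dg1 dg2 p1 p2 holomorphic_on_mult holomorphic_on_power power2_eq_square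
        field_differentiable_mult)
  finally show ?thesis by (simp add: power2_eq_square power3_eq_cube algebra_simps)
qed

lemma higher_deriv_times_ident_at_0:
  fixes g G :: "complex \<Rightarrow> complex"
  assumes "G holomorphic_on S" "open S" "0 \<in> S" "\<And>w. w \<in> S \<Longrightarrow> g w = w * G w"
  shows "(deriv ^^ n) g 0 = of_nat n * (deriv ^^ (n - 1)) G 0"
proof -
  have "(deriv ^^ n) g 0 = (deriv ^^ n) (\<lambda>w. w * G w) 0"
    by (rule higher_deriv_cong_ev) (use assms in \<open>auto simp: eventually_nhds\<close>)
  also have "\<dots> = (\<Sum>i = 0..n. of_nat (n choose i) * (deriv ^^ i) (\<lambda>w. w) 0 * (deriv ^^ (n - i)) G 0)"
    using assms(1-3) by (rule higher_deriv_mult[OF holomorphic_on_ident])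
  also have "\<dots> = (\<Sum>i = 0..n. if i = 1 then of_nat n * (deriv ^^ (n - 1)) G 0 else 0)"
    by (intro sum.cong) auto
  also have "\<dots> = of_nat n * (deriv ^^ (n - 1)) G 0"
    by (cases n) auto
  finally show ?thesis .
qed

section \<open>The second coefficient of a Schwarz function\<close>

lemma Schwarz_Pick_deriv_at_0:
  fixes h :: "complex \<Rightarrow> complex"
  assumes hh: "h holomorphic_on ball 0 1" and lt1: "\<And>z. norm z < 1 \<Longrightarrow> norm (h z) < 1"
  shows "norm (deriv h 0) \<le> 1 - (norm (h 0))^2"
proof -
  define c where "c = h 0"
  have c: "norm c < 1" using lt1[of 0] by (simp add: c_def)
  define r where "r = 1 - (norm c)^2"
  have r: "r > 0" using c by (simp add: r_def power_less_one_iff abs_square_less_1)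
  define M where "M = Moebius_function 0 c"
  have M_eq: "M = (\<lambda>z. (z - c) / (1 - cnj c * z))"
    by (simp add: M_def fun_eq_iff Moebius_function_simple)
  have ccn: "1 - cnj c * c = of_real r"
    unfolding r_def by (metis complex_norm_square mult.commute of_real_1 of_real_diff)
  have dM: "deriv M c = 1 / of_real r"
  proof -
    have "1 - cnj c * c \<noteq> 0" using ccn r by simp
    then have "(M has_field_derivative 1 / (1 - cnj c * c)) (at c)"
      unfolding M_eq by (auto intro!: derivative_eq_intros simp: power2_eq_square)
    then show ?thesis unfolding ccn by (simp add: DERIV_imp_deriv)
  qed
  have hM: "M holomorphic_on ball 0 1"
    unfolding M_def using Moebius_function_holomorphic c by blast
  have himg: "h ` ball 0 1 \<subseteq> ball 0 1" using lt1 by auto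
  have psi: "(\<lambda>z. M (h z)) holomorphic_on ball 0 1"
    using holomorphic_on_compose_gen[OF hh hM himg] by (simp add: comp_def)
  have "norm (deriv (\<lambda>z. M (h z)) 0) \<le> 1"
    using Schwarz_Lemma(2)[OF psi, of 0] c lt1
    by (simp add: M_def c_def Moebius_function_eq_zero Moebius_function_norm_lt_1)
  moreover have "deriv (\<lambda>z. M (h z)) 0 = deriv h 0 / of_real r"
    using deriv_compose[OF hM open_ball hh open_ball himg] dM by (simp add: c_def)
  ultimately have "norm (deriv h 0) / r \<le> 1"
    using r by (simp add: norm_divide)
  then show ?thesis
    using r by (simp add: r_def c_def divide_le_eq)
qed

lemma Schwarz_deriv2_bound:
  fixes \<omega> :: "complex \<Rightarrow> complex"
  assumes h\<omega>: "\<omega> holomorphic_on ball 0 1" and \<omega>0: "\<omega> 0 = 0"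
    and lt1: "\<And>z. norm z < 1 \<Longrightarrow> norm (\<omega> z) < 1"
  shows "norm (deriv (deriv \<omega>) 0) \<le> 2 * (1 - (norm (deriv \<omega> 0))^2)"
proof -
  obtain h where hh: "h holomorphic_on ball 0 1" and \<omega>h: "\<And>z. norm z < 1 \<Longrightarrow> \<omega> z = z * h z"
    using Schwarz3[OF h\<omega> \<omega>0] by blast
  have derivs: "(deriv ^^ n) \<omega> 0 = of_nat n * (deriv ^^ (n - 1)) h 0" for n
    using \<omega>h by (intro higher_deriv_times_ident_at_0[OF hh]) auto
  have d1: "deriv \<omega> 0 = h 0" and d2: "deriv (deriv \<omega>) 0 = 2 * deriv h 0"
    using derivs[of 1] derivs[of 2] by (simp_all add: numeral_2_eq_2)
  text \<open>Either \<open>h\<close> attains modulus 1, and then \<open>\<omega>\<close> is a rotation, or \<open>h\<close> maps the disc into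
    itself and the Schwarz-Pick bound for \<open>h\<close> at 0 is the claim.\<close>
  show ?thesis
  proof (cases "\<exists>z. norm z < 1 \<and> norm (h z) \<ge> 1")
    case True
    then obtain z where z: "norm z < 1" "norm (h z) \<ge> 1" by blast
    have "(\<exists>z. norm z < 1 \<and> z \<noteq> 0 \<and> norm (\<omega> z) = norm z) \<or> norm (deriv \<omega> 0) = 1"
    proof (cases "z = 0")
      case True
      then show ?thesis using z Schwarz_Lemma(2)[OF h\<omega> \<omega>0 lt1, of 0] d1 by simp
    next
      case False
      have "norm (\<omega> z) \<ge> norm z"
        using z \<omega>h[of z] by (simp add: norm_mult mult_le_cancel_left1)
      then show ?thesis using z False Schwarz_Lemma(1)[OF h\<omega> \<omega>0 lt1 z(1)] by force
    qed
    then obtain \<alpha> where \<alpha>: "\<And>z. norm z < 1 \<Longrightarrow> \<omega> z = \<alpha> * z" and "norm \<alpha> = 1"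
      using Schwarz_Lemma(3)[OF h\<omega> \<omega>0 lt1, of 0] by auto
    have "deriv \<omega> 0 = \<alpha>"
      using higher_deriv_times_ident_at_0[of "\<lambda>_. \<alpha>" "ball 0 1" \<omega> 1] \<alpha> by (simp add: mult.commute)
    then have "h z = \<alpha>" if "norm z < 1" for z
      using \<alpha>[OF that] \<omega>h[OF that] d1 by (cases "z = 0") auto
    then have "deriv h 0 = 0"
      using deriv_cong_on_open[of "ball 0 1" 0 h "\<lambda>_. \<alpha>"] by simp
    then show ?thesis using d1 d2 \<open>deriv \<omega> 0 = \<alpha>\<close> \<open>norm \<alpha> = 1\<close> by simp
  next
    case False
    then have "norm (deriv h 0) \<le> 1 - (norm (h 0))^2"
      by (intro Schwarz_Pick_deriv_at_0[OF hh]) (simp add: not_le)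
    then show ?thesis using d1 d2 by (simp add: norm_mult)
  qed
qed

section \<open>Logarithmic inverse coefficients in the class S\<close>

lemma open_slit_plane: "open (- \<real>\<^sub>\<le>\<^sub>0 :: complex set)"
  by (simp add: open_Compl)

lemma one_in_slit_plane: "(1::complex) \<in> - \<real>\<^sub>\<le>\<^sub>0"
  by (simp add: complex_nonpos_Reals_iff)

lemma inverse_function_derivs:
  fixes f g :: "complex \<Rightarrow> complex"
  assumes f: "f holomorphic_on S" "open S" and g: "g holomorphic_on U" "open U"
    and sub: "g ` U \<subseteq> S" and fg: "\<And>w. w \<in> U \<Longrightarrow> f (g w) = w"
    and w: "w \<in> U" and df: "deriv f (g w) = 1"
  shows "deriv g w = 1"
    and "deriv (deriv g) w = - deriv (deriv f) (g w)"
    and "deriv (deriv (deriv g)) w = 3 * (deriv (deriv f) (g w))^2 - deriv (deriv (deriv f)) (g w)"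
proof -
  have id: "(deriv ^^ n) (\<lambda>x. f (g x)) w = (deriv ^^ n) (\<lambda>x. x) w" for n
    by (rule higher_deriv_cong_ev) (use g(2) w fg in \<open>auto simp: eventually_nhds\<close>)
  show dg: "deriv g w = 1"
    using id[of 1] deriv_compose[OF f g sub w] df by simp
  show ddg: "deriv (deriv g) w = - deriv (deriv f) (g w)"
    using id[of 2] deriv2_compose[OF f g sub w] df dg by (simp add: numeral_2_eq_2 add_eq_0_iff)
  show "deriv (deriv (deriv g)) w = 3 * (deriv (deriv f) (g w))^2 - deriv (deriv (deriv f)) (g w)"
    using id[of 3] deriv3_compose[OF f g sub w] df dg ddg
    by (simp add: numeral_3_eq_3 power2_eq_square algebra_simps add_eq_0_iff)
qed

lemma deriv_Ln_compose_at_1: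
  fixes G :: "complex \<Rightarrow> complex"
  assumes G: "G holomorphic_on U" "open U" and sub: "G ` U \<subseteq> - \<real>\<^sub>\<le>\<^sub>0"
    and w: "w \<in> U" and G1: "G w = 1"
  shows "deriv (\<lambda>x. Ln (G x)) w = deriv G w"
    and "deriv (deriv (\<lambda>x. Ln (G x))) w = deriv (deriv G) w - (deriv G w)^2"
proof -
  have Ln: "Ln holomorphic_on - \<real>\<^sub>\<le>\<^sub>0"
    by (rule holomorphic_on_Ln) auto
  have dLn: "deriv Ln z = inverse z" if "z \<in> - \<real>\<^sub>\<le>\<^sub>0" for z
    using that by (auto intro!: DERIV_imp_deriv has_field_derivative_Ln)
  have ddLn: "deriv (deriv Ln) 1 = -1"
  proof -
    have "deriv (deriv Ln) 1 = deriv inverse (1::complex)"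
      using dLn by (intro deriv_cong_on_open[OF open_slit_plane one_in_slit_plane]) auto
    also have "\<dots> = -1" by (rule DERIV_imp_deriv) (auto intro!: derivative_eq_intros)
    finally show ?thesis .
  qed
  show "deriv (\<lambda>x. Ln (G x)) w = deriv G w"
    using deriv_compose[OF Ln open_slit_plane G sub w] dLn[OF one_in_slit_plane] G1 by simp
  show "deriv (deriv (\<lambda>x. Ln (G x))) w = deriv (deriv G) w - (deriv G w)^2"
    using deriv2_compose[OF Ln open_slit_plane G sub w] dLn[OF one_in_slit_plane] ddLn G1 by simp
qed

lemma log_inv_coeffs_classS:
  assumes "f \<in> classS"
  shows "log_inv_coeff f 1 = - deriv (deriv f) 0 / 4"
    and "log_inv_coeff f 2 = 3 * (deriv (deriv f) 0)^2 / 16 - deriv (deriv (deriv f)) 0 / 12"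
proof -
  define D :: "complex set" where "D = ball 0 1"
  have hf: "f holomorphic_on D" and inj: "inj_on f D" and f0: "f 0 = 0" and df0: "deriv f 0 = 1"
    using assms by (auto simp: classS_def D_def)
  have D: "open D" "0 \<in> D" by (auto simp: D_def)
  obtain g where hg: "g holomorphic_on f ` D" and gf: "\<And>z. z \<in> D \<Longrightarrow> g (f z) = z"
    using holomorphic_has_inverse[OF hf D(1) inj] by metis
  define V where "V = f ` D"
  have "open V" unfolding V_def by (rule open_mapping_thm3[OF hf D(1) inj])
  moreover have "0 \<in> V" unfolding V_def using D(2) f0 by (metis image_eqI)
  moreover have "g ` V \<subseteq> D" unfolding V_def using gf by auto
  ultimately have V: "open V" "0 \<in> V" "g ` V \<subseteq> D" by blast+
  have fg: "f (g w) = w" if "w \<in> V" for w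
    using that gf by (auto simp: V_def)
  have g0: "g 0 = 0" using gf[OF D(2)] f0 by simp
  have g_derivs: "deriv g 0 = 1" "deriv (deriv g) 0 = - deriv (deriv f) 0"
    "deriv (deriv (deriv g)) 0 = 3 * (deriv (deriv f) 0)^2 - deriv (deriv (deriv f)) 0"
    using inverse_function_derivs[OF hf D(1) hg[folded V_def] V(1,3) fg V(2)] g0 df0 by simp_all
  define G where "G w = (if w = 0 then 1 else g w / w)" for w
  have hG: "G holomorphic_on V"
    by (rule pole_theorem_open_0[OF hg[folded V_def] V(1), of 0]) (auto simp: G_def g0 g_derivs(1))
  have gG: "\<And>w. w \<in> V \<Longrightarrow> g w = w * G w" and G0: "G 0 = 1" by (auto simp: G_def g0)
  have G_derivs: "(deriv ^^ n) g 0 = of_nat n * (deriv ^^ (n - 1)) G 0" for n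
    by (rule higher_deriv_times_ident_at_0[OF hG V(1,2) gG])
  define U where "U = V \<inter> G -` (- \<real>\<^sub>\<le>\<^sub>0)"
  have U: "open U" "0 \<in> U" "U \<subseteq> V" "G ` U \<subseteq> - \<real>\<^sub>\<le>\<^sub>0"
    unfolding U_def using V(2) G0 one_in_slit_plane
    by (auto intro!: continuous_open_preimage[OF holomorphic_on_imp_continuous_on[OF hG] V(1) open_slit_plane])
  have log_eq: "log_inv_fun f w = Ln (G w)" if w: "w \<in> V" for w
  proof -
    obtain z where z: "z \<in> D" "w = f z" using w by (auto simp: V_def)
    then show ?thesis
      using inv_into_f_f[OF inj z(1)] gf[OF z(1)] unfolding D_def
      by (auto simp: log_inv_fun_def G_def)
  qed
  have "(deriv ^^ n) (log_inv_fun f) 0 = (deriv ^^ n) (\<lambda>w. Ln (G w)) 0" for n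
    using eventually_mono[OF eventually_nhds_in_open[OF V(1,2)] log_eq]
    by (intro higher_deriv_cong_ev refl)
  note log_derivs = this[of 1] this[of 2]
    deriv_Ln_compose_at_1[OF holomorphic_on_subset[OF hG U(3)] U(1,4,2) G0]
  have dG: "deriv G 0 = - deriv (deriv f) 0 / 2"
    using G_derivs[of 2] g_derivs(2) by (simp add: numeral_2_eq_2)
  have ddG: "deriv (deriv G) 0 = (deriv (deriv f) 0)^2 - deriv (deriv (deriv f)) 0 / 3"
    using G_derivs[of 3] g_derivs(3) by (simp add: numeral_3_eq_3 field_simps)
  have "log_inv_coeff f 1 = deriv G 0 / 2"
    and "log_inv_coeff f 2 = (deriv (deriv G) 0 - (deriv G 0)^2) / 4"
    using log_derivs by (simp_all add: log_inv_coeff_def numeral_2_eq_2)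
  then show "log_inv_coeff f 1 = - deriv (deriv f) 0 / 4"
    and "log_inv_coeff f 2 = 3 * (deriv (deriv f) 0)^2 / 16 - deriv (deriv (deriv f)) 0 / 12"
    by (simp_all add: dG ddG field_simps power2_eq_square)
qed

section \<open>The function B\<close>

lemma one_plus_tanh_notin_nonpos_Reals:
  fixes z :: complex
  assumes "\<bar>Im z\<bar> < pi / 2"
  shows "cosh z \<noteq> 0" and "1 + tanh z \<notin> \<real>\<^sub>\<le>\<^sub>0"
proof -
  define u where "u = exp z ^ 2"
  have u: "u \<notin> \<real>\<^sub>\<le>\<^sub>0"
  proof
    assume "u \<in> \<real>\<^sub>\<le>\<^sub>0"
    moreover have u_exp: "u = exp (2 * z)" by (simp add: u_def exp_double)
    ultimately have "sin (2 * Im z) = 0" and Re_u: "Re u \<le> 0"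
      by (auto simp: complex_nonpos_Reals_iff Im_exp)
    moreover have "-pi < 2 * Im z" "2 * Im z < pi" using assms by linarith+
    ultimately have "Im z = 0" using sin_eq_0_pi by force
    then show False using Re_u by (simp add: u_exp Re_exp)
  qed
  then have "u \<noteq> -1" by (auto simp: complex_nonpos_Reals_iff)
  then show "cosh z \<noteq> 0" by (simp add: cosh_zero_iff u_def)
  have u1: "u + 1 \<noteq> 0" using \<open>u \<noteq> -1\<close> by (metis add_eq_0_iff2)
  have "tanh z = (exp z * (exp z - inverse (exp z))) / (exp z * (exp z + inverse (exp z)))"
    by (simp add: tanh_altdef exp_minus)
  also have "\<dots> = (u - 1) / (u + 1)"
    by (simp add: u_def power2_eq_square algebra_simps)
  finally have "1 + tanh z = 2 * u / (u + 1)"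
    using u1 by (simp add: field_simps)
  also have "\<dots> \<notin> \<real>\<^sub>\<le>\<^sub>0"
  proof
    assume "2 * u / (u + 1) \<in> \<real>\<^sub>\<le>\<^sub>0"
    then obtain r where r: "2 * u / (u + 1) = of_real r" "r \<le> 0"
      by (auto elim!: nonpos_Reals_cases)
    then have "u * of_real (2 - r) = of_real r"
      using u1 by (simp add: field_simps)
    then have "u = of_real (r / (2 - r))"
      using r(2) by (simp add: field_simps del: of_real_diff)
    moreover have "r / (2 - r) \<le> 0" using r(2) by (simp add: divide_nonpos_pos)
    ultimately show False using u by (metis nonpos_Reals_of_real_iff)
  qed
  finally show "1 + tanh z \<notin> \<real>\<^sub>\<le>\<^sub>0" .
qed

lemma Re_csqrt_pos:
  assumes "w \<notin> \<real>\<^sub>\<le>\<^sub>0"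
  shows "Re (csqrt w) > 0"
proof (rule ccontr)
  define c where "c = csqrt w"
  assume "\<not> Re (csqrt w) > 0"
  then have Re0: "Re c = 0" using Re_csqrt[of w] by (simp add: c_def)
  have "c * c = w" using power2_csqrt[of w] by (simp add: c_def power2_eq_square)
  then have "Re w = (Re c)^2 - (Im c)^2" "Im w = 2 * Re c * Im c"
    by (auto simp: power2_eq_square)
  then have "w \<in> \<real>\<^sub>\<le>\<^sub>0" using Re0 by (simp add: complex_nonpos_Reals_iff)
  with assms show False by simp
qed

lemma abs_Im_lt_pi_half:
  assumes "z \<in> ball (0::complex) 1"
  shows "\<bar>Im z\<bar> < pi / 2"
proof -
  have "norm z < 1" using assms by simp
  then show ?thesis using abs_Im_le_cmod[of z] pi_gt3 by linarith
qed

lemma one_plus_tanh_in_slit_plane: "(\<lambda>z. 1 + tanh z) ` ball (0::complex) 1 \<subseteq> - \<real>\<^sub>\<le>\<^sub>0"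
  using one_plus_tanh_notin_nonpos_Reals(2)[OF abs_Im_lt_pi_half] by blast

lemma has_field_derivative_one_plus_tanh:
  fixes z :: complex
  assumes "z \<in> ball 0 1"
  shows "((\<lambda>z. 1 + tanh z) has_field_derivative 1 - tanh z ^ 2) (at z)"
  using one_plus_tanh_notin_nonpos_Reals(1)[OF abs_Im_lt_pi_half[OF assms]]
  by (auto intro!: derivative_eq_intros)

lemma holomorphic_one_plus_tanh: "(\<lambda>z. 1 + tanh z) holomorphic_on ball (0::complex) 1"
  unfolding holomorphic_on_open[OF open_ball] using has_field_derivative_one_plus_tanh by blast

lemma Bfun_holomorphic: "Bfun holomorphic_on ball 0 1"
  using holomorphic_on_compose_gen[OF holomorphic_one_plus_tanh holomorphic_on_csqrt
      one_plus_tanh_in_slit_plane]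
  by (simp add: comp_def Bfun_def[abs_def])

lemma Re_Bfun_pos:
  assumes "z \<in> ball 0 1"
  shows "Re (Bfun z) > 0"
  unfolding Bfun_def using one_plus_tanh_in_slit_plane assms by (intro Re_csqrt_pos) blast

lemma Bfun_derivs_at_0: "Bfun 0 = 1" "deriv Bfun 0 = 1/2" "deriv (deriv Bfun) 0 = -1/4"
proof -
  define T :: "complex \<Rightarrow> complex" where "T z = 1 + tanh z" for z
  have dT: "deriv T z = 1 - tanh z ^ 2" if "z \<in> ball 0 1" for z
    unfolding T_def using that by (intro DERIV_imp_deriv has_field_derivative_one_plus_tanh)
  have ddT: "deriv (deriv T) 0 = 0"
  proof -
    have "deriv (deriv T) 0 = deriv (\<lambda>z. 1 - tanh z ^ 2) (0::complex)"
      using dT by (intro deriv_cong_on_open[of "ball 0 1"]) auto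
    also have "\<dots> = 0"
      by (rule DERIV_imp_deriv) (auto intro!: derivative_eq_intros)
    finally show ?thesis .
  qed
  have dS: "deriv csqrt w = inverse (2 * csqrt w)" if "w \<in> - \<real>\<^sub>\<le>\<^sub>0" for w
    using that by (intro DERIV_imp_deriv has_field_derivative_csqrt) auto
  have ddS: "deriv (deriv csqrt) 1 = -1/4"
  proof -
    have "deriv (deriv csqrt) 1 = deriv (\<lambda>w. inverse (2 * csqrt w)) 1"
      using dS by (intro deriv_cong_on_open[OF open_slit_plane one_in_slit_plane]) auto
    also have "\<dots> = -1/4"
      by (rule DERIV_imp_deriv) (use one_in_slit_plane in \<open>auto intro!: derivative_eq_intros\<close>)
    finally show ?thesis .
  qed
  have B: "Bfun = (\<lambda>z. csqrt (T z))" by (simp add: fun_eq_iff Bfun_def T_def)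
  have T0: "T 0 = 1" and dT0: "deriv T 0 = 1" using dT[of 0] by (simp_all add: T_def)
  note chain = holomorphic_on_csqrt open_slit_plane holomorphic_one_plus_tanh[folded T_def] open_ball
    one_plus_tanh_in_slit_plane[folded T_def] centre_in_ball[THEN iffD2, OF zero_less_one]
  show "Bfun 0 = 1" by (simp add: Bfun_def)
  show "deriv Bfun 0 = 1/2"
    unfolding B deriv_compose[OF chain] T0 dT0 dS[OF one_in_slit_plane] by simp
  show "deriv (deriv Bfun) 0 = -1/4"
    unfolding B deriv2_compose[OF chain] T0 dT0 ddT dS[OF one_in_slit_plane] ddS by simp
qed

section \<open>Integrals of B composed with a Schwarz function\<close>

lemma Noshiro_Warschawski:
  fixes p :: "complex \<Rightarrow> complex"
  assumes hp: "p holomorphic_on S" and S: "open S" "convex S"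
    and pos: "\<And>z. z \<in> S \<Longrightarrow> Re (deriv p z) > 0"
  shows "inj_on p S"
proof (rule inj_onI, rule ccontr)
  fix a b assume a: "a \<in> S" and b: "b \<in> S" and eq: "p a = p b" and ne: "a \<noteq> b"
  define L where "L t = a + of_real t * (b - a)" for t :: real
  have L: "L t \<in> S" if "0 \<le> t" "t \<le> 1" for t
  proof -
    have "L t = (1 - t) *\<^sub>R a + t *\<^sub>R b" by (simp add: L_def scaleR_conv_of_real algebra_simps)
    then show ?thesis using that convexD_alt[OF S(2) a b] by simp
  qed
  define \<phi> where "\<phi> t = Re (p (L t) / (b - a))" for t
  have "(\<phi> has_real_derivative Re (deriv p (L t))) (at t)" if "0 \<le> t" "t \<le> 1" for t
  proof -
    have "(p has_field_derivative deriv p (L t)) (at (a + of_real t * (b - a)))"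
      using holomorphic_derivI[OF hp S(1) L[OF that]] by (simp add: L_def)
    moreover have "((\<lambda>z. a + z * (b - a)) has_field_derivative b - a) (at (of_real t))"
      by (auto intro!: derivative_eq_intros)
    ultimately have "((\<lambda>z. p (a + z * (b - a))) has_field_derivative deriv p (L t) * (b - a)) (at (of_real t))"
      by (rule DERIV_chain2)
    from DERIV_cdivide[OF this, of "b - a"]
    have "((\<lambda>z. p (a + z * (b - a)) / (b - a)) has_field_derivative deriv p (L t)) (at (of_real t))"
      using ne by simp
    from has_field_derivative_Re[OF has_vector_derivative_real_field[OF this]]
    show ?thesis by (simp add: \<phi>_def[abs_def] L_def)
  qed
  then obtain t where t: "0 < t" "t < 1" "\<phi> 1 - \<phi> 0 = (1 - 0) * Re (deriv p (L t))"
    using MVT2[of 0 1 \<phi> "\<lambda>t. Re (deriv p (L t))"] by force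
  moreover have "\<phi> 1 = \<phi> 0" using eq by (simp add: \<phi>_def L_def)
  ultimately have "Re (deriv p (L t)) = 0" by simp
  moreover have "Re (deriv p (L t)) > 0" using t by (intro pos L) auto
  ultimately show False by simp
qed

lemma has_field_derivative_linepath_integral:
  fixes p :: "complex \<Rightarrow> complex"
  assumes hp: "p holomorphic_on S" and S: "open S" "convex S" and a: "a \<in> S" and z: "z \<in> S"
  shows "((\<lambda>z. contour_integral (linepath a z) p) has_field_derivative p z) (at z)"
proof -
  have "contour_integral (linepath a b) p + contour_integral (linepath b c) p
        + contour_integral (linepath c a) p = 0" if "b \<in> S" "c \<in> S" for b c
    using a that closed_segment_subset[OF _ _ S(2)]
    by (intro has_chain_integral_chain_integral3 Cauchy_theorem_convex_simple[OF hp S(2)])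
       (auto simp: path_image_join)
  from triangle_contour_integrals_convex_primitive[OF holomorphic_on_imp_continuous_on[OF hp] a S(2) z this]
  show ?thesis using at_within_open[OF z S(1)] by simp
qed

lemma integral_Bfun_compose_in_classBT:
  fixes \<omega> :: "complex \<Rightarrow> complex"
  assumes h\<omega>: "\<omega> holomorphic_on ball 0 1" and \<omega>0: "\<omega> 0 = 0"
    and \<omega>1: "\<omega> ` ball 0 1 \<subseteq> ball 0 1"
  defines "F \<equiv> \<lambda>z. contour_integral (linepath 0 z) (\<lambda>t. Bfun (\<omega> t))"
  shows "F \<in> classBT" and "\<And>z. z \<in> ball 0 1 \<Longrightarrow> deriv F z = Bfun (\<omega> z)"
proof -
  have hB\<omega>: "(\<lambda>t. Bfun (\<omega> t)) holomorphic_on ball 0 1"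
    using holomorphic_on_compose_gen[OF h\<omega> Bfun_holomorphic \<omega>1] by (simp add: comp_def)
  have F': "(F has_field_derivative Bfun (\<omega> z)) (at z)" if "z \<in> ball 0 1" for z
    unfolding F_def using that by (intro has_field_derivative_linepath_integral[OF hB\<omega>]) auto
  then show dF: "\<And>z. z \<in> ball 0 1 \<Longrightarrow> deriv F z = Bfun (\<omega> z)"
    using DERIV_imp_deriv by blast
  have hF: "F holomorphic_on ball 0 1"
    unfolding holomorphic_on_open[OF open_ball] using F' by blast
  have "Re (deriv F z) > 0" if "z \<in> ball 0 1" for z
    using dF[OF that] Re_Bfun_pos \<omega>1 that by (simp add: image_subset_iff)
  then have "inj_on F (ball 0 1)"
    by (rule Noshiro_Warschawski[OF hF open_ball convex_ball])
  moreover have "subordinate (deriv F) Bfun"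
    unfolding subordinate_def using h\<omega> \<omega>0 \<omega>1 dF
    by (intro exI[of _ \<omega>]) (auto simp: image_subset_iff)
  ultimately show "F \<in> classBT"
    using hF dF[of 0] \<omega>0 by (simp add: classBT_def classS_def F_def Bfun_derivs_at_0(1))
qed

lemma log_inv_coeffs_Bfun_subordinate:
  fixes \<omega> :: "complex \<Rightarrow> complex"
  assumes f: "f \<in> classS" and h\<omega>: "\<omega> holomorphic_on ball 0 1" and \<omega>0: "\<omega> 0 = 0"
    and \<omega>1: "\<omega> ` ball 0 1 \<subseteq> ball 0 1"
    and f': "\<forall>z\<in>ball 0 1. deriv f z = Bfun (\<omega> z)"
  shows "log_inv_coeff f 1 = - deriv \<omega> 0 / 8"
    and "log_inv_coeff f 2 = 13/192 * (deriv \<omega> 0)^2 - deriv (deriv \<omega>) 0 / 24"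
proof -
  have z0: "(0::complex) \<in> ball 0 1" by simp
  have f'': "deriv (deriv f) z = deriv (\<lambda>z. Bfun (\<omega> z)) z" if "z \<in> ball 0 1" for z
    by (rule deriv_cong_on_open[OF open_ball that]) (use f' in auto)
  note chain = Bfun_holomorphic open_ball h\<omega> open_ball \<omega>1 z0
  have d2: "deriv (deriv f) 0 = deriv \<omega> 0 / 2"
    using f''[OF z0] deriv_compose[OF chain] \<omega>0 Bfun_derivs_at_0 by simp
  have "deriv (deriv (deriv f)) 0 = deriv (deriv (\<lambda>z. Bfun (\<omega> z))) 0"
    using f'' by (intro deriv_cong_on_open[OF open_ball z0])
  then have d3: "deriv (deriv (deriv f)) 0 = deriv (deriv \<omega>) 0 / 2 - (deriv \<omega> 0)^2 / 4"
    using deriv2_compose[OF chain] \<omega>0 Bfun_derivs_at_0 by simp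
  show "log_inv_coeff f 1 = - deriv \<omega> 0 / 8"
    using log_inv_coeffs_classS(1)[OF f] d2 by simp
  show "log_inv_coeff f 2 = 13/192 * (deriv \<omega> 0)^2 - deriv (deriv \<omega>) 0 / 24"
    using log_inv_coeffs_classS(2)[OF f] d2 d3 by (simp add: field_simps power2_eq_square)
qed

lemma log_inv_coeff_bounds_classBT:
  assumes "f \<in> classBT"
  shows "norm (log_inv_coeff f 1) \<le> 1/8" and "norm (log_inv_coeff f 2) \<le> 1/12"
proof -
  obtain \<omega> where h\<omega>: "\<omega> holomorphic_on ball 0 1" and \<omega>0: "\<omega> 0 = 0"
    and \<omega>1: "\<And>z. norm z < 1 \<Longrightarrow> norm (\<omega> z) < 1"
    and f': "\<forall>z\<in>ball 0 1. deriv f z = Bfun (\<omega> z)"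
    using assms by (auto simp: classBT_def subordinate_def)
  have "f \<in> classS" and "\<omega> ` ball 0 1 \<subseteq> ball 0 1"
    using assms \<omega>1 by (auto simp: classBT_def)
  note coeffs = log_inv_coeffs_Bfun_subordinate[OF this(1) h\<omega> \<omega>0 this(2) f']
  define c where "c = norm (deriv \<omega> 0)"
  have c: "c \<le> 1" using Schwarz_Lemma(2)[OF h\<omega> \<omega>0 \<omega>1, of 0] by (simp add: c_def)
  have d: "norm (deriv (deriv \<omega>) 0) \<le> 2 * (1 - c^2)"
    using Schwarz_deriv2_bound[OF h\<omega> \<omega>0 \<omega>1] by (simp add: c_def)
  show "norm (log_inv_coeff f 1) \<le> 1/8"
    unfolding coeffs(1) using c by (simp add: norm_divide c_def)
  have "norm (log_inv_coeff f 2)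
        \<le> norm (13/192 * (deriv \<omega> 0)^2) + norm (deriv (deriv \<omega>) 0 / 24)"
    unfolding coeffs(2) by (rule norm_triangle_ineq4)
  also have "\<dots> = 13/192 * c^2 + norm (deriv (deriv \<omega>) 0) / 24"
    by (simp add: norm_mult norm_power norm_divide c_def)
  also have "\<dots> \<le> 1/12"
    using d zero_le_power2[of c] by argo
  finally show "norm (log_inv_coeff f 2) \<le> 1/12" .
qed

lemma f1_classBT: "f1 \<in> classBT" and log_inv_coeff_f1: "log_inv_coeff f1 1 = - 1/8"
proof -
  have f1: "f1 = (\<lambda>z. contour_integral (linepath 0 z) (\<lambda>t. Bfun ((\<lambda>x. x) t)))"
    by (simp add: fun_eq_iff f1_def)
  have id: "(\<lambda>x::complex. x) holomorphic_on ball 0 1" "(\<lambda>x::complex. x) ` ball 0 1 \<subseteq> ball 0 1"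
    by auto
  note BT = integral_Bfun_compose_in_classBT[OF id(1) _ id(2), folded f1, simplified]
  show "f1 \<in> classBT" by (rule BT(1))
  then have "f1 \<in> classS" by (simp add: classBT_def)
  from log_inv_coeffs_Bfun_subordinate(1)[OF this id(1) _ id(2)] BT(2)
  show "log_inv_coeff f1 1 = - 1/8" by simp
qed

lemma f2_classBT: "f2 \<in> classBT" and log_inv_coeff_f2: "log_inv_coeff f2 2 = - 1/12"
proof -
  have f2: "f2 = (\<lambda>z. contour_integral (linepath 0 z) (\<lambda>t. Bfun ((\<lambda>x. x^2) t)))"
    by (simp add: fun_eq_iff f2_def)
  have sq: "(\<lambda>x::complex. x^2) holomorphic_on ball 0 1" "(\<lambda>x::complex. x^2) ` ball 0 1 \<subseteq> ball 0 1"
    by (auto intro!: holomorphic_intros simp: norm_power power_less_one_iff abs_square_less_1)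
  note BT = integral_Bfun_compose_in_classBT[OF sq(1) _ sq(2), folded f2, simplified]
  show "f2 \<in> classBT" by (rule BT(1))
  then have "f2 \<in> classS" by (simp add: classBT_def)
  moreover have "deriv (\<lambda>x::complex. x^2) = (\<lambda>x. 2 * x)"
    by (rule ext, rule DERIV_imp_deriv) (auto intro!: derivative_eq_intros)
  ultimately show "log_inv_coeff f2 2 = - 1/12"
    using log_inv_coeffs_Bfun_subordinate(2)[OF _ sq(1) _ sq(2)] BT(2) by simp
qed

theorem theorem4p1:
  shows "(\<forall>f\<in>classBT. norm (log_inv_coeff f 1) \<le> 1/8 \<and> norm (log_inv_coeff f 2) \<le> 1/12)
       \<and> (f1 \<in> classBT \<and> norm (log_inv_coeff f1 1) = 1/8)
       \<and> (f2 \<in> classBT \<and> norm (log_inv_coeff f2 2) = 1/12)"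
  using log_inv_coeff_bounds_classBT f1_classBT log_inv_coeff_f1 f2_classBT log_inv_coeff_f2
  by simp

end
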